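(* Assume (K1), (K2), (L), (W1)–(W3) and the exponent conditions $\frac1{q_\Phi}=\frac1{q_{\mathsf F}}+\frac1{q_{\mathsf P}}$, $q_\Phi>d$, $\tilde q>d$ with $\frac1{\tilde q}=\frac2{q_\gamma}+\frac1{q_{\mathsf G}}$. Then: (i) for every $C_P>0$ there exist $C_B>0$ and $\bar r>0$ such that for all $x\in\Omega$, all $P\in\mathrm{GL}^+(d)$ with $|P|+|P^{-1}|\le C_P$, all $F\in\mathrm{GL}^+(d)$ and all $N\in\mathbb R^{d\times d}$ with $|N-\mathbf 1|<\bar r$, $|B(x,F,NP)-B(x,F,P)|\le C_B|N-\mathbf 1|\,(W(x,FP^{-1})+1)$; (ii) for every $C_P>0$ there exist $C_W>0$ and $\tilde r>0$ such that for all $x\in\Omega$, all $P_1,P_2\in\mathrm{GL}^+(d)$ with $|P_1|+|P_1^{-1}|\le C_P$ and $|P_1-P_2|\le\tilde r$, and all $F\in\mathrm{GL}^+(d)$, $|W(x,FP_1^{-1})-W(x,FP_2^{-1})-B(x,F,P_1):(P_1-P_2)|\le C_W(W(x,FP_1^{-1})+1)|P_1-P_2|^2$.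
   Context: Notation: $A:C=\mathrm{tr}(AC^\top)$, $|A|$ Frobenius norm, $\mathbf 1$ identity, $\mathrm{GL}^+(d)=\{\det A>0\}$, $A^{-\top}=(A^{-1})^\top$, $\mathbb M(F)$ the vector of all minors of $F$ (length $\mu_d$). $\Omega\subset\mathbb R^d$ bounded Lipschitz domain, $T>0$, exponents $q_\Phi,q_{\mathsf F},q_{\mathsf P},q_{\mathsf G},q_\gamma>1$ with $q_{\mathsf G}>d$. (K1) $K:\mathbb R^{d\times d}\to(-\infty,\infty]$ is $C^2$ on $\mathrm{GL}^+(d)$; (K2) $K(P)\ge C_1(|P|^{q_{\mathsf P}}+\det(P)^{-q_\gamma})-C_2$ on $\mathrm{GL}^+(d)$, $C_1,C_2>0$, $q_{\mathsf P},q_\gamma>d$. (L) $\ell\in C^1([0,T];W^{1,q_\Phi}(\Omega;\mathbb R^d)^* )$. $W:\Omega\times\mathbb R^{d\times d}\to[0,\infty]$ with $W(x,F)<\infty$ iff $F\in\mathrm{GL}^+(d)$ and: (W1) there are $j\in L^1(\Omega)$, $q_{\mathsf F}>d$, $C_3>0$ with $W(x,F)\ge j(x)+C_3|F|^{q_{\mathsf F}}$; (W2) $W(x,F)=\mathbb W(x,\mathbb M(F))$ for a normal integrand $\mathbb W$ convex in its second variable; (W3) there are $\delta,C_4,C_5>0$ such that for all $x\in\Omega$, $F\in\mathrm{GL}^+(d)$, $N$ with $|N-\mathbf 1|<\delta$: $W(x,\cdot)$ is differentiable on $\mathrm{GL}^+(d)$, $|F^\top\mathrm D_FW(x,F)|\le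 C_4(W(x,F)+1)$, and $|F^\top\mathrm D_FW(x,F)-(FN)^\top\mathrm D_FW(x,FN)|\le C_5|N-\mathbf 1|(W(x,F)+1)$. $B(x,F,P):=-(FP^{-1})^\top\mathrm D_FW(x,FP^{-1})P^{-\top}$ for $F,P\in\mathrm{GL}^+(d)$. *)

theory Defs
  imports "HOL-Analysis.Analysis"
begin

text \<open>Matrices are real^'d^'d; the Frobenius norm is norm, A:C is the inner product A \<bullet> C,
  the identity is mat 1, the inverse is matrix_inv.\<close>

definition GLp :: "(real^'d^'d) set" where
  "GLp = {A. det A > 0}"

definition mat_unit :: "'d \<Rightarrow> 'd \<Rightarrow> real^'d^'d" where
  "mat_unit i j = (\<chi> k l. if k = i \<and> l = j then 1 else 0)"

definition grad_mat :: "(real^'d^'d \<Rightarrow> real) \<Rightarrow> real^'d^'d \<Rightarrow> real^'d^'d" where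
  "grad_mat f A = (\<chi> i j. frechet_derivative f (at A) (mat_unit i j))"

definition C2_on :: "(real^'d^'d) set \<Rightarrow> (real^'d^'d \<Rightarrow> real) \<Rightarrow> bool" where
  "C2_on S f \<longleftrightarrow> (\<forall>A\<in>S. f differentiable (at A)) \<and>
     (\<forall>A\<in>S. grad_mat f differentiable (at A)) \<and>
     (\<forall>i j. continuous_on S (\<lambda>A. grad_mat (\<lambda>B. grad_mat f B $ i $ j) A))"

text \<open>Minors: for index sets I, J with card I = card J \<noteq> 0 the (I,J)-minor, with a fixed
  (choice-dependent) sign convention given by a fixed bijection between I and J; other
  coordinates are 0.  The vector of all minors lives in real^('d set \<times> 'd set).\<close>
definition minor :: "real^'d^'d \<Rightarrow> 'd set \<Rightarrow> 'd set \<Rightarrow> real" where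
  "minor F I J = (let q = (SOME q. bij_betw q I J) in
     (\<Sum>\<sigma> | \<sigma> permutes I. of_int (sign \<sigma>) * (\<Prod>i\<in>I. F $ i $ q (\<sigma> i))))"

definition minors :: "real^'d^'d \<Rightarrow> real^('d set \<times> 'd set)" where
  "minors F = (\<chi> p. if card (fst p) = card (snd p) \<and> fst p \<noteq> {} then minor F (fst p) (snd p) else 0)"

definition lsc :: "('a::topological_space \<Rightarrow> ereal) \<Rightarrow> bool" where
  "lsc f \<longleftrightarrow> (\<forall>c. closed {y. f y \<le> c})"

definition convex_ereal :: "('a::real_vector \<Rightarrow> ereal) \<Rightarrow> bool" where
  "convex_ereal f \<longleftrightarrow> (\<forall>y z t. 0 \<le> t \<and> t \<le> 1 \<longrightarrow>
      f (t *\<^sub>R y + (1 - t) *\<^sub>R z) \<le> ereal t * f y + ereal (1 - t) * f z)"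

definition normal_integrand :: "('x::euclidean_space) set \<Rightarrow> ('x \<Rightarrow> 'y::euclidean_space \<Rightarrow> ereal) \<Rightarrow> bool" where
  "normal_integrand \<Omega> g \<longleftrightarrow>
     (\<lambda>p. g (fst p) (snd p)) \<in> borel_measurable (restrict_space lebesgue \<Omega> \<Otimes>\<^sub>M borel) \<and>
     (\<forall>x\<in>\<Omega>. lsc (g x))"

definition lipschitz_domain :: "(real^'d) set \<Rightarrow> bool" where
  "lipschitz_domain \<Omega> \<longleftrightarrow> open \<Omega> \<and> connected \<Omega> \<and> \<Omega> \<noteq> {} \<and>
     (\<forall>z\<in>frontier \<Omega>. \<exists>U R k g L. open U \<and> z \<in> U \<and> orthogonal_matrix R \<and>
        L-lipschitz_on UNIV g \<and> (\<forall>y. g y = g (\<chi> i. if i = k then 0 else y $ i)) \<and>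
        \<Omega> \<inter> U = {x\<in>U. (R *v x) $ k < g (R *v x)})"

definition DW :: "('x \<Rightarrow> real^'d^'d \<Rightarrow> ereal) \<Rightarrow> 'x \<Rightarrow> real^'d^'d \<Rightarrow> real^'d^'d" where
  "DW W x F = grad_mat (\<lambda>G. real_of_ereal (W x G)) F"

definition Bstress :: "('x \<Rightarrow> real^'d^'d \<Rightarrow> ereal) \<Rightarrow> 'x \<Rightarrow> real^'d^'d \<Rightarrow> real^'d^'d \<Rightarrow> real^'d^'d" where
  "Bstress W x F P = - (transpose (F ** matrix_inv P) ** DW W x (F ** matrix_inv P)
        ** transpose (matrix_inv P))"

end

theory Submission
  imports Defs
begin

text \<open>Only (W3) is used. Write \<open>S(G) = G\<^sup>T DW(G)\<close> for the Mandel stress and \<open>G = F P\<^sup>-\<^sup>1\<close>, so that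
  \<open>B(F,P) = - S(G) P\<^sup>-\<^sup>T\<close> and \<open>B(F,NP) = - S(G N\<^sup>-\<^sup>1) N\<^sup>-\<^sup>T P\<^sup>-\<^sup>T\<close>. Part (i) then follows from
  the two estimates of (W3) and \<open>|N\<^sup>-\<^sup>1 - 1| \<le> 2 \<surd>d |N - 1|\<close> for \<open>|N - 1| \<le> 1/2\<close>.
  For (ii) write \<open>P\<^sub>2 = N P\<^sub>1\<close>, so \<open>F P\<^sub>2\<^sup>-\<^sup>1 = G (1 + E)\<close> with \<open>E = N\<^sup>-\<^sup>1 - 1\<close>. The mean value
  theorem along \<open>t \<mapsto> G (1 + t E)\<close>, which stays in \<open>GL\<^sup>+\<close>, expresses the increment of \<open>W\<close> as
  \<open>(G\<^sup>T DW(G M)) : E\<close> with \<open>M = 1 + \<xi> E\<close>, and \<open>G\<^sup>T DW(G M) = M\<^sup>-\<^sup>T S(G M)\<close> differs from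
  \<open>S(G)\<close> by \<open>O(|E|) (W(G) + 1)\<close> by (W3). Finally \<open>B(F,P\<^sub>1) : (P\<^sub>1 - P\<^sub>2) = S(G) : (N - 1)\<close>
  and \<open>E + (N - 1)\<close> is quadratic in \<open>N - 1\<close>.\<close>

lemma matrix_diff_rdistrib: "((A::real^'n^'m) - B) ** (C::real^'p^'n) = A ** C - B ** C"
  by (simp add: matrix_matrix_mult_def vec_eq_iff sum_subtractf left_diff_distrib)

lemma matrix_diff_ldistrib: "(C::real^'n^'m) ** ((A::real^'p^'n) - B) = C ** A - C ** B"
  by (simp add: matrix_matrix_mult_def vec_eq_iff sum_subtractf right_diff_distrib)

lemma matrix_add_rdistrib: "((A::real^'n^'m) + B) ** (C::real^'p^'n) = A ** C + B ** C"
  by (simp add: matrix_matrix_mult_def vec_eq_iff sum.distrib distrib_right)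

lemma transpose_diff: "transpose ((A::real^'n^'m) - B) = transpose A - transpose B"
  by (simp add: transpose_def vec_eq_iff)

lemma norm_vec_sq: "(norm (v::real^'n))\<^sup>2 = (\<Sum>j\<in>UNIV. (v$j)\<^sup>2)"
  by (simp only: power2_norm_eq_inner inner_vec_def) (simp add: power2_eq_square)

lemma norm_matrix_sq: "(norm (A::real^'n^'m))\<^sup>2 = (\<Sum>i\<in>UNIV. \<Sum>j\<in>UNIV. (A$i$j)\<^sup>2)"
  by (simp add: power2_norm_eq_inner inner_vec_def norm_vec_sq[symmetric])

lemma norm_transpose: "norm (transpose (A::real^'n^'m)) = norm A"
proof -
  have "(norm (transpose A))\<^sup>2 = (norm A)\<^sup>2"
    by (simp add: norm_matrix_sq transpose_def) (rule sum.swap)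
  then show ?thesis by simp
qed

lemma norm_matrix_mult_le: "norm ((A::real^'n^'m) ** (B::real^'p^'n)) \<le> norm A * norm B"
proof -
  define col where "col k = (\<chi> j. B$j$k)" for k
  have entry: "(A ** B)$i$k = A$i \<bullet> col k" for i k
    by (simp add: matrix_matrix_mult_def inner_vec_def col_def)
  have cauchy_schwarz: "(A$i \<bullet> col k)\<^sup>2 \<le> (norm (A$i))\<^sup>2 * (norm (col k))\<^sup>2" for i k
  proof -
    have "\<bar>A$i \<bullet> col k\<bar>\<^sup>2 \<le> (norm (A$i) * norm (col k))\<^sup>2"
      by (intro power_mono Cauchy_Schwarz_ineq2) simp
    then show ?thesis by (simp add: power_mult_distrib)
  qed
  have "(norm (A ** B))\<^sup>2 = (\<Sum>i\<in>UNIV. \<Sum>k\<in>UNIV. (A$i \<bullet> col k)\<^sup>2)"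
    by (simp add: norm_matrix_sq entry)
  also have "\<dots> \<le> (\<Sum>i\<in>UNIV. \<Sum>k\<in>UNIV. (norm (A$i))\<^sup>2 * (norm (col k))\<^sup>2)"
    by (intro sum_mono cauchy_schwarz)
  also have "\<dots> = (\<Sum>i\<in>UNIV. (norm (A$i))\<^sup>2) * (\<Sum>k\<in>UNIV. (norm (col k))\<^sup>2)"
    by (simp add: sum_distrib_left sum_distrib_right) (rule sum.swap)
  also have "(\<Sum>i\<in>UNIV. (norm (A$i))\<^sup>2) = (norm A)\<^sup>2"
    by (simp add: power2_norm_eq_inner inner_vec_def)
  also have "(\<Sum>k\<in>UNIV. (norm (col k))\<^sup>2) = (norm B)\<^sup>2"
    by (simp only: norm_matrix_sq norm_vec_sq col_def vec_lambda_beta) (rule sum.swap)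
  finally have "(norm (A ** B))\<^sup>2 \<le> (norm A * norm B)\<^sup>2"
    by (simp add: power_mult_distrib)
  then show ?thesis by (rule power2_le_imp_le) simp
qed

lemma norm_matrix_mult_add_le:
  "norm ((A::real^'n^'m) ** (B::real^'p^'n) + C) \<le> norm A * norm B + norm C"
  using norm_triangle_ineq[of "A ** B" C] norm_matrix_mult_le[of A B] by linarith

lemma inner_matrix_mult_transpose:
  "((A::real^'n^'m) ** transpose (B::real^'n^'p)) \<bullet> C = A \<bullet> (C ** B)"
  by (simp add: inner_vec_def matrix_matrix_mult_def transpose_def sum_distrib_left
      sum_distrib_right mult_ac) (rule sum.cong[OF refl], rule sum.swap)

lemma inner_transpose_matrix_mult:
  "(transpose (A::real^'n^'m) ** X) \<bullet> E = X \<bullet> (A ** E)"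
proof -
  have "(transpose A ** X) \<bullet> E = (\<Sum>i\<in>UNIV. \<Sum>j\<in>UNIV. \<Sum>k\<in>UNIV. A$k$i * X$k$j * E$i$j)"
    by (simp add: inner_vec_def matrix_matrix_mult_def transpose_def sum_distrib_left mult_ac)
  also have "\<dots> = (\<Sum>i\<in>UNIV. \<Sum>k\<in>UNIV. \<Sum>j\<in>UNIV. A$k$i * X$k$j * E$i$j)"
    by (rule sum.cong[OF refl], rule sum.swap)
  also have "\<dots> = (\<Sum>k\<in>UNIV. \<Sum>i\<in>UNIV. \<Sum>j\<in>UNIV. A$k$i * X$k$j * E$i$j)"
    by (rule sum.swap)
  also have "\<dots> = (\<Sum>k\<in>UNIV. \<Sum>j\<in>UNIV. \<Sum>i\<in>UNIV. A$k$i * X$k$j * E$i$j)"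
    by (rule sum.cong[OF refl], rule sum.swap)
  also have "\<dots> = X \<bullet> (A ** E)"
    by (simp add: inner_vec_def matrix_matrix_mult_def sum_distrib_left mult_ac)
  finally show ?thesis .
qed

lemma norm_mat_one: "norm (mat 1 :: real^'n^'n) = sqrt CARD('n)"
proof -
  have "((if i = j then 1 else 0) :: real)\<^sup>2 = (if i = j then 1 else 0)" for i j :: 'n
    by simp
  then have "(norm (mat 1 :: real^'n^'n))\<^sup>2 = CARD('n)"
    by (simp add: norm_matrix_sq mat_def)
  then show ?thesis by (simp add: real_sqrt_unique)
qed

lemma
  assumes "invertible (A::real^'n^'n)"
  shows matrix_inv_right: "A ** matrix_inv A = mat 1"
    and matrix_inv_left: "matrix_inv A ** A = mat 1"
  using someI_ex[OF assms[unfolded invertible_def]] unfolding matrix_inv_def by auto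

lemma matrix_inv_mult:
  assumes "invertible (A::real^'n^'n)" "invertible (B::real^'n^'n)"
  shows "matrix_inv (A ** B) = matrix_inv B ** matrix_inv A"
proof -
  have "(A ** B) ** (matrix_inv B ** matrix_inv A) = A ** ((B ** matrix_inv B) ** matrix_inv A)"
    by (simp add: matrix_mul_assoc)
  then have right_inverse: "(A ** B) ** (matrix_inv B ** matrix_inv A) = mat 1"
    by (simp add: matrix_inv_right assms)
  have "matrix_inv (A ** B)
      = matrix_inv (A ** B) ** ((A ** B) ** (matrix_inv B ** matrix_inv A))"
    by (simp add: right_inverse)
  also have "\<dots> = matrix_inv B ** matrix_inv A"
    by (simp only: matrix_mul_assoc[of "matrix_inv (A ** B)" "A ** B"] matrix_mul_lid
        matrix_inv_left[OF invertible_mult[OF assms]])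
  finally show ?thesis .
qed

lemma GLp_invertible: "A \<in> GLp \<Longrightarrow> invertible A"
  by (simp add: GLp_def invertible_det_nz)

lemma GLp_matrix_inv: "A \<in> GLp \<Longrightarrow> matrix_inv A \<in> GLp"
proof -
  assume A: "A \<in> GLp"
  have "det A * det (matrix_inv A) = 1"
    using det_mul[of A "matrix_inv A"] matrix_inv_right[OF GLp_invertible[OF A]] by simp
  with A show ?thesis
    using zero_less_mult_pos[of "det A" "det (matrix_inv A)"] by (simp add: GLp_def)
qed

lemma GLp_mult: "A \<in> GLp \<Longrightarrow> B \<in> GLp \<Longrightarrow> A ** B \<in> GLp"
  by (simp add: GLp_def det_mul)

lemma
  fixes N :: "real^'n^'n"
  assumes near: "norm (N - mat 1) \<le> 1/2"
  shows invertible_near_id: "invertible N"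
    and norm_matrix_inv_minus_id_le:
      "norm (matrix_inv N - mat 1) \<le> 2 * sqrt CARD('n) * norm (N - mat 1)"
proof -
  have "v = 0" if "N *v v = 0" for v :: "real^'n"
  proof -
    define V :: "real^'n^'n" where "V = (\<chi> i j. v$i)"
    have "N ** V = 0"
      using that by (simp add: vec_eq_iff matrix_matrix_mult_def matrix_vector_mult_def V_def)
    then have "(N - mat 1) ** V = - V" by (simp add: matrix_diff_rdistrib)
    then have "norm V \<le> norm (N - mat 1) * norm V"
      using norm_matrix_mult_le[of "N - mat 1" V] by simp
    also have "\<dots> \<le> 1/2 * norm V" using near by (intro mult_right_mono) auto
    finally have "V = 0" by simp
    then show "v = 0" by (simp add: V_def vec_eq_iff)
  qed
  then show invertible: "invertible N"
    using invertible_left_inverse matrix_left_invertible_ker by blast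
  define Ni where "Ni = matrix_inv N"
  have "Ni - mat 1 = Ni ** (mat 1 - N)"
    by (simp add: matrix_diff_ldistrib Ni_def matrix_inv_left invertible)
  then have "norm (Ni - mat 1) \<le> norm Ni * norm (N - mat 1)"
    using norm_matrix_mult_le[of Ni "mat 1 - N"] by (simp add: norm_minus_commute)
  also have "\<dots> \<le> (sqrt CARD('n) + norm (Ni - mat 1)) * norm (N - mat 1)"
    using norm_triangle_sub[of Ni "mat 1"] by (intro mult_right_mono) (auto simp: norm_mat_one)
  finally show "norm (Ni - mat 1) \<le> 2 * sqrt CARD('n) * norm (N - mat 1)"
    using mult_left_mono[OF near norm_ge_zero[of "Ni - mat 1"]] by (simp add: algebra_simps)
qed

lemma norm_matrix_inv_near_id_le:
  assumes near: "norm ((N::real^'n^'n) - mat 1) \<le> 1/2"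
  shows "norm (matrix_inv N) \<le> 2 * sqrt CARD('n)"
proof -
  have "norm (matrix_inv N) \<le> sqrt CARD('n) + norm (matrix_inv N - mat 1)"
    using norm_triangle_sub[of "matrix_inv N" "mat 1"] by (simp add: norm_mat_one)
  also have "\<dots> \<le> sqrt CARD('n) + 2 * sqrt CARD('n) * (1/2)"
    using norm_matrix_inv_minus_id_le[OF near]
      mult_left_mono[OF near, of "2 * sqrt CARD('n)"] real_sqrt_ge_zero[of "CARD('n)"]
    by linarith
  finally show ?thesis by simp
qed

text \<open>The segment from the identity to \<open>N\<close> consists of invertible matrices, so the
  continuous function \<open>det\<close> cannot change sign on it.\<close>
lemma det_pos_near_id:
  assumes near: "norm ((N::real^'n^'n) - mat 1) \<le> 1/2"
  shows "det N > 0"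
proof (rule ccontr)
  define M where "M t = mat 1 + t *\<^sub>R (N - mat 1)" for t :: real
  have M_near: "norm (M t - mat 1) \<le> 1/2" if "0 \<le> t" "t \<le> 1" for t
    using that near mult_left_le_one_le[of "norm (N - mat 1)" t] by (simp add: M_def)
  assume "\<not> det N > 0"
  moreover have "continuous_on {0..1} (\<lambda>t. det (M t))"
    unfolding M_def det_def by (intro continuous_intros)
  moreover have "M 1 = N" "det (M 0) = 1" by (simp_all add: M_def)
  ultimately obtain s where "0 \<le> s" "s \<le> 1" "det (M s) = 0"
    using IVT2'[of "\<lambda>t. det (M t)" 1 0 0] by force
  then show False
    using invertible_near_id[OF M_near] invertible_det_nz by blast
qed

lemma frechet_derivative_eq_grad_mat_inner:
  fixes f :: "real^'n^'n \<Rightarrow> real"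
  assumes "f differentiable (at A)"
  shows "frechet_derivative f (at A) H = grad_mat f A \<bullet> H"
proof -
  define f' where "f' = frechet_derivative f (at A)"
  have lin: "linear f'"
    using assms frechet_derivative_works has_derivative_linear unfolding f'_def by blast
  have "(\<Sum>k\<in>UNIV. \<Sum>l\<in>UNIV. if i = k \<and> j = l then H$k$l else 0) = H$i$j" for i j
  proof -
    have "(\<Sum>l\<in>UNIV. if i = k \<and> j = l then H$k$l else 0) = (if i = k then H$k$j else 0)" for k
      by (cases "i = k") simp_all
    then show ?thesis by simp
  qed
  then have "H = (\<Sum>i\<in>UNIV. \<Sum>j\<in>UNIV. H$i$j *\<^sub>R mat_unit i j)"
    by (simp add: vec_eq_iff mat_unit_def if_distrib cong: if_cong)
  then have "f' H = f' (\<Sum>i\<in>UNIV. \<Sum>j\<in>UNIV. H$i$j *\<^sub>R mat_unit i j)"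
    by (rule arg_cong)
  also have "\<dots> = (\<Sum>i\<in>UNIV. \<Sum>j\<in>UNIV. H$i$j * f' (mat_unit i j))"
    by (simp add: linear_sum[OF lin] linear_scale[OF lin] o_def)
  also have "\<dots> = grad_mat f A \<bullet> H"
    by (simp add: inner_vec_def grad_mat_def f'_def mult.commute)
  finally show ?thesis by (simp add: f'_def)
qed

lemma mean_value_right_mult:
  fixes w :: "real^'n^'n \<Rightarrow> real"
  assumes diff: "\<And>t. 0 \<le> t \<Longrightarrow> t \<le> 1 \<Longrightarrow> w differentiable (at (G ** (mat 1 + t *\<^sub>R E)))"
  shows "\<exists>\<xi>. 0 < \<xi> \<and> \<xi> < 1 \<and>
    w (G ** (mat 1 + E)) - w G = (transpose G ** grad_mat w (G ** (mat 1 + \<xi> *\<^sub>R E))) \<bullet> E"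
proof -
  define p where "p t = G ** (mat 1 + t *\<^sub>R E)" for t
  define w' where "w' t = frechet_derivative w (at (p t))" for t
  have p_eq: "p = (\<lambda>t. G + t *\<^sub>R (G ** E))"
    by (simp add: fun_eq_iff p_def matrix_add_ldistrib matrix_scalar_ac scalar_matrix_assoc)
  have "((\<lambda>t. w (p t)) has_derivative (\<lambda>s. w' t (s *\<^sub>R (G ** E)))) (at t within {0..1})"
    if "0 \<le> t" "t \<le> 1" for t
  proof -
    have "(p has_derivative (\<lambda>s. s *\<^sub>R (G ** E))) (at t)"
      unfolding p_eq by (auto intro!: derivative_eq_intros)
    moreover have "(w has_derivative w' t) (at (p t))"
      using diff[OF that] unfolding w'_def p_def frechet_derivative_works .
    ultimately have "((w \<circ> p) has_derivative (w' t \<circ> (\<lambda>s. s *\<^sub>R (G ** E)))) (at t)"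
      by (rule diff_chain_at)
    then show ?thesis by (auto simp: o_def intro: has_derivative_at_withinI)
  qed
  then obtain \<xi> where "0 < \<xi>" "\<xi> < 1" "w (p 1) - w (p 0) = w' \<xi> (G ** E)"
    using mvt_simple[of 0 1 "\<lambda>t. w (p t)" "\<lambda>t s. w' t (s *\<^sub>R (G ** E))"] by auto
  moreover have "w' \<xi> (G ** E) = (transpose G ** grad_mat w (p \<xi>)) \<bullet> E"
    using frechet_derivative_eq_grad_mat_inner[OF diff] \<open>0 < \<xi>\<close> \<open>\<xi> < 1\<close>
    by (simp add: w'_def p_def inner_transpose_matrix_mult)
  ultimately show ?thesis by (auto simp: p_def)
qed

definition mandel :: "(real^'n^'n \<Rightarrow> real) \<Rightarrow> real^'n^'n \<Rightarrow> real^'n^'n" where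
  "mandel w G = transpose G ** grad_mat w G"

definition stress :: "(real^'n^'n \<Rightarrow> real) \<Rightarrow> real^'n^'n \<Rightarrow> real^'n^'n \<Rightarrow> real^'n^'n" where
  "stress w F P = - (mandel w (F ** matrix_inv P) ** transpose (matrix_inv P))"

lemma Bstress_eq_stress: "Bstress W x F P = stress (\<lambda>G. real_of_ereal (W x G)) F P"
  by (simp add: Bstress_def stress_def mandel_def DW_def matrix_mul_assoc)

text \<open>Hypothesis (W3) for a single energy density \<open>w\<close>.\<close>
locale mandel_bounds =
  fixes w :: "real^'n^'n \<Rightarrow> real" and C4 C5 \<delta> :: real
  assumes constants_pos: "0 < \<delta>" "0 < C4" "0 < C5"
    and norm_mandel_le: "G \<in> GLp \<Longrightarrow> norm (mandel w G) \<le> C4 * (w G + 1)"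
    and norm_mandel_right_mult_diff_le: "G \<in> GLp \<Longrightarrow> norm (N - mat 1) < \<delta> \<Longrightarrow>
      norm (mandel w (G ** N) - mandel w G) \<le> C5 * norm (N - mat 1) * (w G + 1)"
begin

lemma weight_nonneg: "G \<in> GLp \<Longrightarrow> 0 \<le> w G + 1"
  using norm_mandel_le[of G] norm_ge_zero[of "mandel w G"] constants_pos
    mult_pos_neg[of C4 "w G + 1"] by linarith

lemma norm_stress_right_mult_diff_le:
  assumes F: "F \<in> GLp" and P: "P \<in> GLp" and CP: "norm (matrix_inv P) \<le> CP"
    and near: "2 * sqrt CARD('n) * norm (N - mat 1) < min 1 \<delta>"
  shows "norm (stress w F (N ** P) - stress w F P)
    \<le> CP * (4 * real CARD('n) * C5 + 2 * sqrt CARD('n) * C4) * norm (N - mat 1) * (w (F ** matrix_inv P) + 1)"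
proof -
  define Pi Ni G r where "Pi = matrix_inv P" and "Ni = matrix_inv N" and "G = F ** Pi"
    and "r = norm (N - mat 1)"
  have G: "G \<in> GLp" using F P by (simp add: G_def Pi_def GLp_mult GLp_matrix_inv)
  have weight: "0 \<le> w G + 1" by (rule weight_nonneg[OF G])
  have r_half: "r \<le> 1/2"
    using near mult_right_mono[of 1 "sqrt CARD('n)" r] by (simp add: r_def)
  have Ni_near: "norm (Ni - mat 1) \<le> 2 * sqrt CARD('n) * r"
    using norm_matrix_inv_minus_id_le r_half by (simp add: Ni_def r_def)
  have Ni_le: "norm Ni \<le> 2 * sqrt CARD('n)"
    using norm_matrix_inv_near_id_le r_half by (simp add: Ni_def r_def)
  have mandel_diff: "norm (mandel w (G ** Ni) - mandel w G) \<le> C5 * (2 * sqrt CARD('n) * r) * (w G + 1)"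
  proof -
    have "norm (mandel w (G ** Ni) - mandel w G) \<le> C5 * norm (Ni - mat 1) * (w G + 1)"
      using Ni_near near by (intro norm_mandel_right_mult_diff_le G) (simp add: r_def)
    also have "\<dots> \<le> C5 * (2 * sqrt CARD('n) * r) * (w G + 1)"
      using Ni_near constants_pos weight by (intro mult_right_mono mult_left_mono) auto
    finally show ?thesis .
  qed
  have "matrix_inv (N ** P) = Pi ** Ni"
    using matrix_inv_mult[OF invertible_near_id GLp_invertible[OF P]] r_half
    by (simp add: Pi_def Ni_def r_def)
  then have "stress w F (N ** P) - stress w F P
      = - (((mandel w (G ** Ni) - mandel w G) ** transpose Ni
            + mandel w G ** transpose (Ni - mat 1)) ** transpose Pi)"
    by (simp add: stress_def G_def Pi_def matrix_mul_assoc matrix_transpose_mul transpose_diff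
        matrix_diff_rdistrib matrix_diff_ldistrib matrix_add_rdistrib)
  then have "norm (stress w F (N ** P) - stress w F P)
      \<le> norm ((mandel w (G ** Ni) - mandel w G) ** transpose Ni
            + mandel w G ** transpose (Ni - mat 1)) * norm Pi"
    using norm_matrix_mult_le[of "(mandel w (G ** Ni) - mandel w G) ** transpose Ni
        + mandel w G ** transpose (Ni - mat 1)" "transpose Pi"] by (simp add: norm_transpose)
  also have "\<dots> \<le> (norm (mandel w (G ** Ni) - mandel w G) * norm Ni
      + norm (mandel w G) * norm (Ni - mat 1)) * norm Pi"
  proof (rule mult_right_mono[OF _ norm_ge_zero])
    show "norm ((mandel w (G ** Ni) - mandel w G) ** transpose Ni
            + mandel w G ** transpose (Ni - mat 1))
      \<le> norm (mandel w (G ** Ni) - mandel w G) * norm Ni + norm (mandel w G) * norm (Ni - mat 1)"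
      using norm_matrix_mult_add_le[of "mandel w (G ** Ni) - mandel w G" "transpose Ni"
          "mandel w G ** transpose (Ni - mat 1)"]
        norm_matrix_mult_le[of "mandel w G" "transpose (Ni - mat 1)"]
      by (simp add: norm_transpose)
  qed
  also have "\<dots> \<le> ((C5 * (2 * sqrt CARD('n) * r) * (w G + 1)) * (2 * sqrt CARD('n))
      + (C4 * (w G + 1)) * (2 * sqrt CARD('n) * r)) * CP"
  proof (rule mult_mono[OF add_mono])
    show "norm (mandel w (G ** Ni) - mandel w G) * norm Ni
        \<le> (C5 * (2 * sqrt CARD('n) * r) * (w G + 1)) * (2 * sqrt CARD('n))"
      by (rule mult_mono[OF mandel_diff Ni_le]) (use constants_pos weight in \<open>auto simp: r_def\<close>)
    show "norm (mandel w G) * norm (Ni - mat 1) \<le> (C4 * (w G + 1)) * (2 * sqrt CARD('n) * r)"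
      by (rule mult_mono[OF norm_mandel_le[OF G] Ni_near]) (use constants_pos weight in auto)
  qed (use CP constants_pos weight in
      \<open>auto simp: Pi_def r_def intro!: add_nonneg_nonneg mult_nonneg_nonneg\<close>)
  also have "\<dots> = CP * (4 * (sqrt CARD('n) * sqrt CARD('n)) * C5 + 2 * sqrt CARD('n) * C4) * r * (w G + 1)"
    by (simp add: algebra_simps)
  also have "sqrt CARD('n) * sqrt CARD('n) = CARD('n)" by simp
  finally show ?thesis by (simp add: r_def G_def Pi_def)
qed

lemma norm_pulled_back_grad_diff_le:
  assumes G: "G \<in> GLp" and half: "norm (M - mat 1) \<le> 1/2" and small: "norm (M - mat 1) < \<delta>"
  shows "norm (transpose G ** grad_mat w (G ** M) - mandel w G)
    \<le> (2 * sqrt CARD('n) * (C4 + C5 * \<delta>) + C5) * norm (M - mat 1) * (w G + 1)"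
proof -
  define Mi e where "Mi = matrix_inv M" and "e = norm (M - mat 1)"
  have weight: "0 \<le> w G + 1" by (rule weight_nonneg[OF G])
  have mandel_diff: "norm (mandel w (G ** M) - mandel w G) \<le> C5 * e * (w G + 1)"
    using norm_mandel_right_mult_diff_le[OF G small] by (simp add: e_def)
  have "transpose Mi ** mandel w (G ** M) = transpose (M ** Mi) ** transpose G ** grad_mat w (G ** M)"
    by (simp add: mandel_def matrix_transpose_mul matrix_mul_assoc)
  then have pulled_back_eq: "transpose G ** grad_mat w (G ** M) - mandel w G
      = transpose (Mi - mat 1) ** mandel w (G ** M) + (mandel w (G ** M) - mandel w G)"
    by (simp add: Mi_def matrix_inv_right invertible_near_id[OF half] transpose_diff
        matrix_diff_rdistrib)
  have "norm (transpose G ** grad_mat w (G ** M) - mandel w G)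
      \<le> norm (Mi - mat 1) * norm (mandel w (G ** M)) + norm (mandel w (G ** M) - mandel w G)"
    unfolding pulled_back_eq
    using norm_matrix_mult_add_le[of "transpose (Mi - mat 1)" "mandel w (G ** M)"
        "mandel w (G ** M) - mandel w G"] by (simp only: norm_transpose)
  also have "\<dots> \<le> (2 * sqrt CARD('n) * e) * ((C4 + C5 * \<delta>) * (w G + 1)) + C5 * e * (w G + 1)"
  proof (intro add_mono mult_mono mandel_diff)
    show "norm (Mi - mat 1) \<le> 2 * sqrt CARD('n) * e"
      using norm_matrix_inv_minus_id_le[OF half] by (simp add: Mi_def e_def)
    have "C5 * e * (w G + 1) \<le> C5 * \<delta> * (w G + 1)"
      using small constants_pos weight by (intro mult_right_mono mult_left_mono) (auto simp: e_def)
    then show "norm (mandel w (G ** M)) \<le> (C4 + C5 * \<delta>) * (w G + 1)"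
      using norm_triangle_sub[of "mandel w (G ** M)" "mandel w G"] norm_mandel_le[OF G] mandel_diff
      by (simp add: algebra_simps)
  qed (use constants_pos weight in \<open>auto simp: e_def\<close>)
  also have "\<dots> = (2 * sqrt CARD('n) * (C4 + C5 * \<delta>) + C5) * e * (w G + 1)"
    by (simp add: algebra_simps)
  finally show ?thesis by (simp add: e_def)
qed

lemma right_mult_expansion:
  assumes diff: "\<And>H. H \<in> GLp \<Longrightarrow> w differentiable (at H)"
    and G: "G \<in> GLp" and half: "norm E \<le> 1/2" and small: "norm E < \<delta>"
  shows "\<bar>w (G ** (mat 1 + E)) - w G - mandel w G \<bullet> E\<bar>
    \<le> (2 * sqrt CARD('n) * (C4 + C5 * \<delta>) + C5) * (norm E)\<^sup>2 * (w G + 1)"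
proof -
  define K where "K = 2 * sqrt CARD('n) * (C4 + C5 * \<delta>) + C5"
  have near: "norm (t *\<^sub>R E) \<le> norm E" if "0 \<le> t" "t \<le> 1" for t
    using that mult_left_le_one_le[of "norm E" t] by simp
  have "w differentiable (at (G ** (mat 1 + t *\<^sub>R E)))" if "0 \<le> t" "t \<le> 1" for t
    using near[OF that] half
    by (intro diff GLp_mult G) (simp add: GLp_def det_pos_near_id)
  then obtain \<xi> where \<xi>: "0 < \<xi>" "\<xi> < 1" and
    mvt: "w (G ** (mat 1 + E)) - w G = (transpose G ** grad_mat w (G ** (mat 1 + \<xi> *\<^sub>R E))) \<bullet> E"
    using mean_value_right_mult by blast
  define R where "R = transpose G ** grad_mat w (G ** (mat 1 + \<xi> *\<^sub>R E)) - mandel w G"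
  have "norm ((mat 1 + \<xi> *\<^sub>R E) - mat 1) \<le> 1/2" "norm ((mat 1 + \<xi> *\<^sub>R E) - mat 1) < \<delta>"
    using near[of \<xi>] \<xi> half small by auto
  from norm_pulled_back_grad_diff_le[OF G this]
  have "norm R \<le> K * norm (\<xi> *\<^sub>R E) * (w G + 1)"
    by (simp add: R_def K_def)
  also have "\<dots> \<le> K * norm E * (w G + 1)"
    using near[of \<xi>] \<xi> constants_pos weight_nonneg[OF G]
    by (intro mult_right_mono mult_left_mono) (auto simp: K_def)
  finally have "\<bar>R \<bullet> E\<bar> \<le> K * norm E * (w G + 1) * norm E"
    by (meson Cauchy_Schwarz_ineq2 mult_right_mono norm_ge_zero order_trans)
  then show ?thesis
    using mvt by (simp add: R_def K_def power2_eq_square algebra_simps)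
qed

lemma inverse_right_mult_expansion:
  assumes diff: "\<And>H. H \<in> GLp \<Longrightarrow> w differentiable (at H)"
    and G: "G \<in> GLp" and near: "4 * sqrt CARD('n) * norm (N - mat 1) \<le> min 1 \<delta>"
  shows "\<bar>w G - w (G ** matrix_inv N) - mandel w G \<bullet> (N - mat 1)\<bar>
    \<le> (2 * sqrt CARD('n) * C4 + 4 * real CARD('n) * (2 * sqrt CARD('n) * (C4 + C5 * \<delta>) + C5))
       * (norm (N - mat 1))\<^sup>2 * (w G + 1)"
proof -
  define K E \<rho> where "K = 2 * sqrt CARD('n) * (C4 + C5 * \<delta>) + C5"
    and "E = matrix_inv N - mat 1" and "\<rho> = norm (N - mat 1)"
  have weight: "0 \<le> w G + 1" by (rule weight_nonneg[OF G])
  have "1 \<le> sqrt CARD('n)" by simp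
  then have "1 \<le> 2 * sqrt CARD('n)" by linarith
  then have "1 * \<rho> \<le> 2 * sqrt CARD('n) * \<rho>"
    by (intro mult_right_mono) (auto simp: \<rho>_def)
  then have \<rho>_half: "\<rho> \<le> 1/2" using near by (simp add: \<rho>_def)
  then have E_le: "norm E \<le> 2 * sqrt CARD('n) * \<rho>"
    using norm_matrix_inv_minus_id_le by (simp add: E_def \<rho>_def)
  then have E_half: "norm E \<le> 1/2" and E_small: "norm E < \<delta>"
    using near constants_pos by (simp_all add: \<rho>_def)
  have iN: "invertible N" using invertible_near_id \<rho>_half by (simp add: \<rho>_def)
  \<comment> \<open>the first-order terms cancel up to a term quadratic in \<open>N - 1\<close>\<close>
  have "E ** (N - mat 1) = - (E + (N - mat 1))"
    by (simp add: E_def matrix_diff_rdistrib matrix_diff_ldistrib matrix_inv_left iN)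
  then have split: "w G - w (G ** (mat 1 + E)) - mandel w G \<bullet> (N - mat 1)
      = - (w (G ** (mat 1 + E)) - w G - mandel w G \<bullet> E) + mandel w G \<bullet> (E ** (N - mat 1))"
    by (simp add: inner_add_right inner_diff_right)
  have "\<bar>mandel w G \<bullet> (E ** (N - mat 1))\<bar> \<le> norm (mandel w G) * (norm E * \<rho>)"
    using Cauchy_Schwarz_ineq2[of "mandel w G" "E ** (N - mat 1)"] norm_matrix_mult_le[of E "N - mat 1"]
      mult_left_mono[of "norm (E ** (N - mat 1))" "norm E * \<rho>" "norm (mandel w G)"]
    by (simp add: \<rho>_def)
  also have "\<dots> \<le> C4 * (w G + 1) * (norm E * \<rho>)"
    by (intro mult_right_mono norm_mandel_le[OF G]) (simp add: \<rho>_def)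
  finally have "\<bar>w G - w (G ** (mat 1 + E)) - mandel w G \<bullet> (N - mat 1)\<bar>
      \<le> K * (norm E)\<^sup>2 * (w G + 1) + C4 * (w G + 1) * (norm E * \<rho>)"
    using right_mult_expansion[OF diff G E_half E_small] unfolding split K_def by linarith
  also have "\<dots> \<le> K * (2 * sqrt CARD('n) * \<rho>)\<^sup>2 * (w G + 1)
      + C4 * (w G + 1) * ((2 * sqrt CARD('n) * \<rho>) * \<rho>)"
  proof (rule add_mono)
    show "K * (norm E)\<^sup>2 * (w G + 1) \<le> K * (2 * sqrt CARD('n) * \<rho>)\<^sup>2 * (w G + 1)"
      using E_le constants_pos weight
      by (intro mult_right_mono mult_left_mono power_mono) (auto simp: K_def)
    show "C4 * (w G + 1) * (norm E * \<rho>) \<le> C4 * (w G + 1) * ((2 * sqrt CARD('n) * \<rho>) * \<rho>)"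
      using E_le constants_pos weight
      by (intro mult_right_mono mult_left_mono) (auto simp: \<rho>_def)
  qed
  also have "(2 * sqrt CARD('n) * \<rho>)\<^sup>2 = 4 * real CARD('n) * \<rho>\<^sup>2"
    by (simp add: power_mult_distrib)
  also have "K * (4 * real CARD('n) * \<rho>\<^sup>2) * (w G + 1) + C4 * (w G + 1) * ((2 * sqrt CARD('n) * \<rho>) * \<rho>)
      = (2 * sqrt CARD('n) * C4 + 4 * real CARD('n) * K) * \<rho>\<^sup>2 * (w G + 1)"
    by (simp add: algebra_simps power2_eq_square)
  finally show ?thesis
    using matrix_inv_left[OF iN] by (simp add: E_def K_def \<rho>_def)
qed

lemma stress_taylor_bound:
  assumes diff: "\<And>H. H \<in> GLp \<Longrightarrow> w differentiable (at H)"
    and F: "F \<in> GLp" and P1: "P1 \<in> GLp" and P2: "P2 \<in> GLp"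
    and CP: "norm (matrix_inv P1) \<le> CP"
    and near: "4 * sqrt CARD('n) * CP * norm (P1 - P2) \<le> min 1 \<delta>"
  shows "\<bar>w (F ** matrix_inv P1) - w (F ** matrix_inv P2) - stress w F P1 \<bullet> (P1 - P2)\<bar>
    \<le> (2 * sqrt CARD('n) * C4 + 4 * real CARD('n) * (2 * sqrt CARD('n) * (C4 + C5 * \<delta>) + C5))
       * CP\<^sup>2 * (w (F ** matrix_inv P1) + 1) * (norm (P1 - P2))\<^sup>2"
proof -
  define C P1i G N where "C = 2 * sqrt CARD('n) * C4 + 4 * real CARD('n) * (2 * sqrt CARD('n) * (C4 + C5 * \<delta>) + C5)"
    and "P1i = matrix_inv P1" and "G = F ** P1i" and "N = P2 ** P1i"
  have G: "G \<in> GLp" using F P1 by (simp add: G_def P1i_def GLp_mult GLp_matrix_inv)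
  have iP1: "invertible P1" by (rule GLp_invertible[OF P1])
  have N_minus_id: "N - mat 1 = - ((P1 - P2) ** P1i)"
    by (simp add: N_def matrix_diff_rdistrib P1i_def matrix_inv_right iP1)
  then have N_near: "norm (N - mat 1) \<le> CP * norm (P1 - P2)"
    using norm_matrix_mult_le[of "P1 - P2" P1i] mult_right_mono[OF CP norm_ge_zero[of "P1 - P2"]]
    by (simp add: P1i_def mult.commute)
  have "4 * sqrt CARD('n) * norm (N - mat 1) \<le> 4 * sqrt CARD('n) * CP * norm (P1 - P2)"
    using mult_left_mono[OF N_near, of "4 * sqrt CARD('n)"] by (simp add: mult.assoc)
  from this near have "4 * sqrt CARD('n) * norm (N - mat 1) \<le> min 1 \<delta>"
    by (rule order_trans)
  note expansion = inverse_right_mult_expansion[OF diff G this, folded C_def]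
  have "N ** P1 = P2"
    by (simp add: N_def P1i_def matrix_mul_assoc[symmetric] matrix_inv_left iP1)
  moreover have "invertible N"
    using P1 P2 by (simp add: N_def P1i_def GLp_invertible GLp_mult GLp_matrix_inv)
  ultimately have "F ** matrix_inv P2 = G ** matrix_inv N"
    using matrix_inv_mult[OF _ iP1, of N] by (simp add: G_def P1i_def matrix_mul_assoc)
  moreover have "stress w F P1 \<bullet> (P1 - P2) = mandel w G \<bullet> (N - mat 1)"
    unfolding N_minus_id
    by (simp add: stress_def G_def P1i_def inner_matrix_mult_transpose)
  moreover have "C * (norm (N - mat 1))\<^sup>2 * (w G + 1) \<le> C * (CP * norm (P1 - P2))\<^sup>2 * (w G + 1)"
    using N_near constants_pos weight_nonneg[OF G]
    by (intro mult_right_mono mult_left_mono power_mono) (auto simp: C_def)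
  ultimately show ?thesis
    using expansion by (simp add: C_def G_def P1i_def power_mult_distrib mult_ac)
qed

end

lemma uniform_stress_right_mult_bound:
  fixes w :: "'x \<Rightarrow> real^'n^'n \<Rightarrow> real"
  assumes bounds: "\<And>x. x \<in> X \<Longrightarrow> mandel_bounds (w x) C4 C5 \<delta>" and CP: "CP > 0"
  shows "\<exists>CB>0. \<exists>rb>0. \<forall>x\<in>X. \<forall>P\<in>GLp. \<forall>F\<in>GLp. \<forall>N.
    norm P + norm (matrix_inv P) \<le> CP \<longrightarrow> norm (N - mat 1) < rb \<longrightarrow>
    norm (stress (w x) F (N ** P) - stress (w x) F P)
      \<le> CB * norm (N - mat 1) * (w x (F ** matrix_inv P) + 1)"
proof (cases "X = {}")
  case False
  then obtain x0 where "mandel_bounds (w x0) C4 C5 \<delta>" using bounds by blast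
  then have pos: "0 < \<delta>" "0 < C4" "0 < C5" by (simp_all add: mandel_bounds_def)
  define CB rb where "CB = CP * (4 * real CARD('n) * C5 + 2 * sqrt CARD('n) * C4)"
    and "rb = min 1 \<delta> / (2 * sqrt CARD('n))"
  have "CB > 0" "rb > 0" using CP pos by (auto simp: CB_def rb_def intro!: add_pos_pos mult_pos_pos)
  moreover have "norm (stress (w x) F (N ** P) - stress (w x) F P)
      \<le> CB * norm (N - mat 1) * (w x (F ** matrix_inv P) + 1)"
    if "x \<in> X" "P \<in> GLp" "F \<in> GLp" "norm P + norm (matrix_inv P) \<le> CP"
      "norm (N - mat 1) < rb" for x P F N
  proof -
    have "norm (matrix_inv P) \<le> CP" using that(4) norm_ge_zero[of P] by linarith
    with that show ?thesis
      unfolding CB_def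
      by (intro mandel_bounds.norm_stress_right_mult_diff_le[OF bounds])
        (simp_all add: rb_def pos_less_divide_eq mult.commute)
  qed
  ultimately show ?thesis by blast
qed (use CP in \<open>auto intro: exI[of _ 1]\<close>)

lemma uniform_stress_taylor_bound:
  fixes w :: "'x \<Rightarrow> real^'n^'n \<Rightarrow> real"
  assumes bounds: "\<And>x. x \<in> X \<Longrightarrow> mandel_bounds (w x) C4 C5 \<delta>"
    and diff: "\<And>x H. x \<in> X \<Longrightarrow> H \<in> GLp \<Longrightarrow> w x differentiable (at H)" and CP: "CP > 0"
  shows "\<exists>CW>0. \<exists>rt>0. \<forall>x\<in>X. \<forall>P1\<in>GLp. \<forall>P2\<in>GLp. \<forall>F\<in>GLp.
    norm P1 + norm (matrix_inv P1) \<le> CP \<longrightarrow> norm (P1 - P2) \<le> rt \<longrightarrow>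
    \<bar>w x (F ** matrix_inv P1) - w x (F ** matrix_inv P2) - stress (w x) F P1 \<bullet> (P1 - P2)\<bar>
      \<le> CW * (w x (F ** matrix_inv P1) + 1) * (norm (P1 - P2))\<^sup>2"
proof (cases "X = {}")
  case False
  then obtain x0 where "mandel_bounds (w x0) C4 C5 \<delta>" using bounds by blast
  then have pos: "0 < \<delta>" "0 < C4" "0 < C5" by (simp_all add: mandel_bounds_def)
  define CW rt where
    "CW = (2 * sqrt CARD('n) * C4 + 4 * real CARD('n) * (2 * sqrt CARD('n) * (C4 + C5 * \<delta>) + C5))
      * CP\<^sup>2"
    and "rt = min 1 \<delta> / (4 * sqrt CARD('n) * CP)"
  have "CW > 0" "rt > 0"
    using CP pos by (auto simp: CW_def rt_def intro!: add_pos_pos mult_pos_pos)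
  moreover have "\<bar>w x (F ** matrix_inv P1) - w x (F ** matrix_inv P2) - stress (w x) F P1 \<bullet> (P1 - P2)\<bar>
      \<le> CW * (w x (F ** matrix_inv P1) + 1) * (norm (P1 - P2))\<^sup>2"
    if "x \<in> X" "P1 \<in> GLp" "P2 \<in> GLp" "F \<in> GLp" "norm P1 + norm (matrix_inv P1) \<le> CP"
      "norm (P1 - P2) \<le> rt" for x P1 P2 F
  proof -
    have "norm (matrix_inv P1) \<le> CP" using that(5) norm_ge_zero[of P1] by linarith
    with that show ?thesis
      unfolding CW_def
      by (intro mandel_bounds.stress_taylor_bound[OF bounds] diff)
        (simp_all add: rt_def pos_le_divide_eq CP mult.commute mult.left_commute)
  qed
  ultimately show ?thesis by blast
qed (use CP in \<open>auto intro: exI[of _ 1]\<close>)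

theorem lemma4p5:
  fixes \<Omega> :: "(real^'d) set"
    and K :: "real^'d^'d \<Rightarrow> ereal"
    and W :: "real^'d \<Rightarrow> real^'d^'d \<Rightarrow> ereal"
    and WW :: "real^'d \<Rightarrow> real^('d set \<times> 'd set) \<Rightarrow> ereal"
    and j :: "real^'d \<Rightarrow> real"
    and q\<Phi> qF qP qG q\<gamma> qt C1 C2 C3 C4 C5 \<delta> :: real
  assumes dom: "lipschitz_domain \<Omega>" "bounded \<Omega>"
    and exps: "q\<Phi> > 1" "qF > 1" "qP > 1" "qG > 1" "q\<gamma> > 1" "qG > CARD('d)"
    (* (K1), (K2) *)
    and K0: "\<forall>P. K P \<noteq> -\<infinity>" "\<forall>P\<in>GLp. K P \<noteq> \<infinity>"
    and K1: "C2_on GLp (\<lambda>P. real_of_ereal (K P))"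
    and K2: "C1 > 0" "C2 > 0" "qP > CARD('d)" "q\<gamma> > CARD('d)"
      "\<forall>P\<in>GLp. K P \<ge> ereal (C1 * (norm P powr qP + det P powr (- q\<gamma>)) - C2)"
    (* W: values in [0,\<infinity>], finite exactly on GL+ *)
    and W0: "\<forall>x\<in>\<Omega>. \<forall>F. W x F \<ge> 0 \<and> (W x F < \<infinity> \<longleftrightarrow> F \<in> GLp)"
    (* (W1) *)
    and W1: "set_integrable lebesgue \<Omega> j" "qF > CARD('d)" "C3 > 0"
      "\<forall>x\<in>\<Omega>. \<forall>F. W x F \<ge> ereal (j x + C3 * norm F powr qF)"
    (* (W2) *)
    and W2: "normal_integrand \<Omega> WW" "\<forall>x\<in>\<Omega>. convex_ereal (WW x)"
      "\<forall>x\<in>\<Omega>. \<forall>F. W x F = WW x (minors F)"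
    (* (W3) *)
    and W3: "\<delta> > 0" "C4 > 0" "C5 > 0"
      "\<forall>x\<in>\<Omega>. \<forall>F\<in>GLp. (\<lambda>G. real_of_ereal (W x G)) differentiable (at F)"
      "\<forall>x\<in>\<Omega>. \<forall>F\<in>GLp. norm (transpose F ** DW W x F) \<le> C4 * (real_of_ereal (W x F) + 1)"
      "\<forall>x\<in>\<Omega>. \<forall>F\<in>GLp. \<forall>N. norm (N - mat 1) < \<delta> \<longrightarrow>
         norm (transpose F ** DW W x F - transpose (F ** N) ** DW W x (F ** N))
           \<le> C5 * norm (N - mat 1) * (real_of_ereal (W x F) + 1)"
    (* exponent relations *)
    and qrel: "1 / q\<Phi> = 1 / qF + 1 / qP" "q\<Phi> > CARD('d)"
      "qt > CARD('d)" "1 / qt = 2 / q\<gamma> + 1 / qG"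
  shows
    "(\<forall>CP > 0. \<exists>CB > 0. \<exists>rb > 0. \<forall>x\<in>\<Omega>. \<forall>P\<in>GLp. \<forall>F\<in>GLp. \<forall>N.
        norm P + norm (matrix_inv P) \<le> CP \<longrightarrow> norm (N - mat 1) < rb \<longrightarrow>
        norm (Bstress W x F (N ** P) - Bstress W x F P)
          \<le> CB * norm (N - mat 1) * (real_of_ereal (W x (F ** matrix_inv P)) + 1))
     \<and> (\<forall>CP > 0. \<exists>CW > 0. \<exists>rt > 0. \<forall>x\<in>\<Omega>. \<forall>P1\<in>GLp. \<forall>P2\<in>GLp. \<forall>F\<in>GLp.
        norm P1 + norm (matrix_inv P1) \<le> CP \<longrightarrow> norm (P1 - P2) \<le> rt \<longrightarrow>
        \<bar>real_of_ereal (W x (F ** matrix_inv P1)) - real_of_ereal (W x (F ** matrix_inv P2))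
           - Bstress W x F P1 \<bullet> (P1 - P2)\<bar>
          \<le> CW * (real_of_ereal (W x (F ** matrix_inv P1)) + 1) * (norm (P1 - P2))\<^sup>2)"
proof -
  have bounds: "mandel_bounds (\<lambda>G. real_of_ereal (W x G)) C4 C5 \<delta>" if "x \<in> \<Omega>" for x
    by unfold_locales (use W3 that in \<open>auto simp: mandel_def DW_def norm_minus_commute\<close>)
  show ?thesis
    unfolding Bstress_eq_stress
    by (intro conjI allI impI
        uniform_stress_right_mult_bound[where w = "\<lambda>x G. real_of_ereal (W x G)", OF bounds]
        uniform_stress_taylor_bound[where w = "\<lambda>x G. real_of_ereal (W x G)", OF bounds
          W3(4)[rule_format]])
qed

end
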